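(* Let $p$ be a prime, $n\ge2$, $1\le k\le n-1$ and $0\le l\le n$. Then \[ \nu_{n,k,l}(p)=G_{k,n}+(p^l-1)G_{k-1,n-1}, \] and moreover \[ \nu_{n,k,l}(p)/\nu_{n,n-k,n-l}(p)=p^{k+l-n}. \]
   Context: For $0\le j\le n$, $\nu_{n,k,j}(p)=\sum_{W\subset\mathbb{F}_p^n,\ \dim W=k}p^{\dim(W\cap U)}$, where $U\subset\mathbb{F}_p^n$ is any fixed $j$-dimensional subspace (the value is independent of $U$). $G_{a,b}$ is the number of $a$-dimensional subspaces of $\mathbb{F}_p^b$, i.e. $G_{a,b}=\frac{[b]!}{[a]![b-a]!}$ with $[m]=(p^m-1)/(p-1)$ and $[m]!=\prod_{i=1}^m[i]$. *)

theory Defs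
  imports "HOL-Analysis.Analysis"
begin

text \<open>The vector space F_p^n is modelled as 'a ^ 'n, where 'a is a finite field with
  CARD('a) = p prime (hence 'a is isomorphic to F_p) and n = CARD('n).\<close>

definition nu :: "nat \<Rightarrow> ('a::{field,finite} ^ 'n) set \<Rightarrow> nat" where
  "nu k U = (\<Sum>W\<in>{W. vec.subspace W \<and> vec.dim W = k}.
               CARD('a) ^ vec.dim (W \<inter> U))"

definition qint :: "nat \<Rightarrow> nat \<Rightarrow> real" where
  "qint p m = (real p ^ m - 1) / (real p - 1)"

definition qfact :: "nat \<Rightarrow> nat \<Rightarrow> real" where
  "qfact p m = (\<Prod>i\<in>{1..m}. qint p i)"

definition G :: "nat \<Rightarrow> nat \<Rightarrow> nat \<Rightarrow> real" where
  "G p a b = qfact p b / (qfact p a * qfact p (b - a))"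

end

(*
  Since W \<inter> U has p ^ dim (W \<inter> U) elements, nu k U counts the pairs (W, u) with
  u \<in> W \<inter> U.  The zero vector lies in all G(k, n) subspaces of dimension k, and each of the
  p ^ l - 1 nonzero vectors of U lies in G(k - 1, n - 1) of them; more generally, extending
  a basis shows that a j-dimensional subspace lies in G(k - j, n - j) subspaces of
  dimension k.  For the ratio, q-absorption [k] G(k, n) = [n] G(k - 1, n - 1) and the
  symmetry G(n - k, n) = G(k, n) express both values through G(k, n), and the quotient
  becomes (p^n + p^(k+l) - p^k - p^l) / (p^n + p^(2n-k-l) - p^(n-k) - p^(n-l)) = p^(k+l-n).
*)
theory Submission
  imports Defs
begin

lemma qfact_0 [simp]: "qfact p 0 = 1"
  by (simp add: qfact_def)

lemma qfact_Suc: "qfact p (Suc m) = qfact p m * qint p (Suc m)"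
  by (simp add: qfact_def prod.nat_ivl_Suc' mult.commute)

lemma qint_pos: "2 \<le> p \<Longrightarrow> 1 \<le> m \<Longrightarrow> 0 < qint p m"
  unfolding qint_def by (intro divide_pos_pos) (auto intro!: one_less_power)

lemma qfact_pos: "2 \<le> p \<Longrightarrow> 0 < qfact p m"
  by (induction m) (auto simp: qfact_def qfact_Suc qint_pos)

lemma power_diff_eq_qint:
  assumes "p \<noteq> 1" "i \<le> n"
  shows "real p ^ n - real p ^ i = real p ^ i * (real p - 1) * qint p (n - i)"
proof -
  have "(real p - 1) * qint p (n - i) = real p ^ (n - i) - 1"
    using assms(1) by (simp add: qint_def)
  moreover have "real p ^ n - real p ^ i = real p ^ i * (real p ^ (n - i) - 1)"
    using assms(2) by (simp add: algebra_simps flip: power_add)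
  ultimately show ?thesis
    by simp
qed

lemma qfact_eq_mult_prod_qint:
  "k \<le> n \<Longrightarrow> qfact p n = qfact p (n - k) * (\<Prod>i<k. qint p (n - i))"
proof (induction k)
  case (Suc k)
  then have "qfact p (n - k) = qfact p (n - Suc k) * qint p (n - k)"
    using qfact_Suc[of p "n - Suc k"] by (simp add: Suc_diff_Suc)
  with Suc show ?case by simp
qed simp

lemma G_eq_prod_ratio:
  assumes "2 \<le> p" "k \<le> n"
  shows "G p k n = (\<Prod>i<k. real p ^ n - real p ^ i) / (\<Prod>i<k. real p ^ k - real p ^ i)"
proof -
  define c where "c = (\<Prod>i<k. real p ^ i * (real p - 1))"
  have prod_eq: "(\<Prod>i<k. real p ^ m - real p ^ i) = c * qfact p m / qfact p (m - k)"
    if "k \<le> m" for m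
  proof -
    have "(\<Prod>i<k. real p ^ m - real p ^ i) = c * (\<Prod>i<k. qint p (m - i))"
      using assms(1) that by (simp add: c_def power_diff_eq_qint prod.distrib)
    also have "\<dots> = c * qfact p m / qfact p (m - k)"
      using qfact_eq_mult_prod_qint[OF that, of p] qfact_pos[OF assms(1), of "m - k"] by simp
    finally show ?thesis .
  qed
  have "c \<noteq> 0"
    using assms(1) by (simp add: c_def prod_zero_iff)
  moreover have "qfact p k \<noteq> 0" "qfact p (n - k) \<noteq> 0"
    using qfact_pos[OF assms(1)] by (metis less_irrefl)+
  ultimately have "G p k n = (c * qfact p n / qfact p (n - k)) / (c * qfact p k)"
    by (simp add: G_def field_simps)
  then show ?thesis
    using prod_eq[OF assms(2)] prod_eq[of k] by simp
qed

lemma prod_power_diff_shift: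
  fixes x :: "'a::comm_ring_1"
  assumes "j \<le> m"
  shows "(\<Prod>i\<in>{j..<k}. x ^ m - x ^ i) = (x ^ j) ^ (k - j) * (\<Prod>i<k - j. x ^ (m - j) - x ^ i)"
proof (cases "j \<le> k")
  case True
  have "(\<Prod>i\<in>{j..<k}. x ^ m - x ^ i) = (\<Prod>i<k - j. x ^ m - x ^ (i + j))"
    using True prod.shift_bounds_nat_ivl[of "\<lambda>i. x ^ m - x ^ i" 0 j "k - j"]
    by (simp add: atLeast0LessThan)
  also have "\<dots> = (\<Prod>i<k - j. x ^ j * (x ^ (m - j) - x ^ i))"
    using assms by (intro prod.cong) (auto simp: algebra_simps simp flip: power_add)
  finally show ?thesis
    by (simp add: prod.distrib)
qed simp

lemma G_eq_prod_ratio_from: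
  assumes "2 \<le> p" "j \<le> k" "k \<le> n"
  shows "G p (k - j) (n - j) =
           (\<Prod>i\<in>{j..<k}. real p ^ n - real p ^ i) / (\<Prod>i\<in>{j..<k}. real p ^ k - real p ^ i)"
  using assms G_eq_prod_ratio[of p "k - j" "n - j"]
  by (simp add: prod_power_diff_shift)

lemma card_field_ge_two: "2 \<le> CARD('a::{field,finite})"
  using card_mono[of "UNIV :: 'a set" "{0, 1}"] by simp

lemma card_subspace:
  fixes S :: "('a::{field,finite}^'n) set"
  assumes "vec.subspace S"
  shows "card S = CARD('a) ^ vec.dim S"
proof -
  obtain B where B: "B \<subseteq> S" "vec.independent B" "S \<subseteq> vec.span B" "card B = vec.dim S"
    using vec.basis_exists by blast
  have span_B: "vec.span B = S"
    using B assms vec.span_subspace by blast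
  define comb where "comb u = (\<Sum>v\<in>B. u v *s v)" for u :: "_ \<Rightarrow> 'a"
  let ?coeffs = "PiE B (\<lambda>_. UNIV :: 'a set)"
  have "comb ` ?coeffs = S"
  proof
    show "comb ` ?coeffs \<subseteq> S"
      using span_B vec.span_finite[of B] comb_def by auto
    show "S \<subseteq> comb ` ?coeffs"
    proof
      fix x assume "x \<in> S"
      then obtain u where "x = comb u"
        using span_B vec.span_finite[of B] comb_def by auto
      moreover have "comb u = comb (restrict u B)"
        unfolding comb_def by (rule sum.cong) auto
      ultimately show "x \<in> comb ` ?coeffs" by auto
    qed
  qed
  moreover have "inj_on comb ?coeffs"
  proof (rule inj_onI)
    fix u w assume u: "u \<in> ?coeffs" and w: "w \<in> ?coeffs" and "comb u = comb w"
    then have "(\<Sum>v\<in>B. (u v - w v) *s v) = 0"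
      unfolding comb_def by (simp add: vector_sub_rdistrib sum_subtractf)
    then have "\<forall>v\<in>B. u v - w v = 0"
      using B(2) vec.independent_explicit[of B] by (auto elim!: allE[of _ "\<lambda>v. u v - w v"])
    then show "u = w"
      using u w by (auto simp: PiE_def extensional_def fun_eq_iff)
  qed
  ultimately have "card S = card ?coeffs"
    using card_image by fastforce
  also have "\<dots> = CARD('a) ^ vec.dim S"
    using B(4) by (simp add: card_PiE)
  finally show ?thesis .
qed

definition independent_extensions ::
    "('a::field^'n) set \<Rightarrow> ('a^'n) list \<Rightarrow> nat \<Rightarrow> ('a^'n) list set" where
  "independent_extensions V xs r =
     {ys. length ys = r \<and> set ys \<subseteq> V \<and> distinct (xs @ ys) \<and> vec.independent (set (xs @ ys))}"

lemma finite_independent_extensions: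
  "finite (independent_extensions (V :: ('a::{field,finite}^'n) set) xs r)"
proof (rule finite_subset)
  show "independent_extensions V xs r \<subseteq> {ys. set ys \<subseteq> UNIV \<and> length ys = r}"
    by (auto simp: independent_extensions_def)
  show "finite {ys :: ('a^'n) list. set ys \<subseteq> UNIV \<and> length ys = r}"
    by (rule finite_lists_length_eq) simp
qed

lemma independent_extensions_Suc:
  "independent_extensions V xs (Suc r) =
     (\<lambda>(y, ys). y # ys) ` (SIGMA y:V - vec.span (set xs). independent_extensions V (xs @ [y]) r)"
proof
  show "independent_extensions V xs (Suc r) \<subseteq>
      (\<lambda>(y, ys). y # ys) ` (SIGMA y:V - vec.span (set xs). independent_extensions V (xs @ [y]) r)"
  proof
    fix zs assume zs: "zs \<in> independent_extensions V xs (Suc r)"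
    then obtain y ys where zs_eq: "zs = y # ys"
      by (cases zs) (auto simp: independent_extensions_def)
    have "vec.independent (set (xs @ y # ys))" and "distinct (xs @ y # ys)"
      using zs zs_eq by (auto simp: independent_extensions_def)
    then have "vec.independent (insert y (set xs))" and "y \<notin> set xs"
      using vec.independent_mono[of "set (xs @ y # ys)" "insert y (set xs)"] by auto
    then have "y \<notin> vec.span (set xs)"
      by (simp add: vec.independent_insert)
    moreover have "y \<in> V" and "ys \<in> independent_extensions V (xs @ [y]) r"
      using zs zs_eq by (auto simp: independent_extensions_def)
    ultimately show "zs \<in> (\<lambda>(y, ys). y # ys) `
        (SIGMA y:V - vec.span (set xs). independent_extensions V (xs @ [y]) r)"
      using zs_eq by force
  qed
qed (auto simp: independent_extensions_def)

lemma card_independent_extensions: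
  fixes xs :: "('a::{field,finite}^'n) list"
  assumes V: "vec.subspace V"
    and xs: "set xs \<subseteq> V" "distinct xs" "vec.independent (set xs)"
    and "length xs + r \<le> vec.dim V"
  shows "card (independent_extensions V xs r) =
           (\<Prod>i\<in>{length xs..<length xs + r}. CARD('a) ^ vec.dim V - CARD('a) ^ i)"
  using xs assms(5)
proof (induction r arbitrary: xs)
  case 0
  then have "independent_extensions V xs 0 = {[]}"
    by (auto simp: independent_extensions_def)
  then show ?case by simp
next
  case (Suc r)
  let ?q = "CARD('a)" and ?m = "vec.dim V" and ?j = "length xs"
  let ?C = "V - vec.span (set xs)"
  have "vec.span (set xs) \<subseteq> V"
    using Suc.prems V vec.span_minimal by blast
  moreover have "card (vec.span (set xs)) = ?q ^ ?j"
    using card_subspace[of "vec.span (set xs)"] Suc.prems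
    by (simp add: vec.dim_eq_card_independent distinct_card)
  ultimately have card_C: "card ?C = ?q ^ ?m - ?q ^ ?j"
    using card_subspace[OF V] by (simp add: card_Diff_subset)
  have card_fibre: "card (independent_extensions V (xs @ [y]) r) =
      (\<Prod>i\<in>{Suc ?j..<Suc ?j + r}. ?q ^ ?m - ?q ^ i)" if y: "y \<in> ?C" for y
  proof -
    have "y \<notin> set xs"
      using y vec.span_base by blast
    moreover have "vec.independent (insert y (set xs))"
      using y Suc.prems by (intro vec.independent_insertI) auto
    ultimately show ?thesis
      using Suc.prems y Suc.IH[of "xs @ [y]"] by simp
  qed
  have "inj_on (\<lambda>(y, ys). y # ys) (SIGMA y:?C. independent_extensions V (xs @ [y]) r)"
    by (auto simp: inj_on_def)
  then have "card (independent_extensions V xs (Suc r)) =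
      (\<Sum>y\<in>?C. card (independent_extensions V (xs @ [y]) r))"
    by (simp add: independent_extensions_Suc card_image finite_independent_extensions)
  also have "\<dots> = (?q ^ ?m - ?q ^ ?j) * (\<Prod>i\<in>{Suc ?j..<Suc ?j + r}. ?q ^ ?m - ?q ^ i)"
    using card_fibre card_C by simp
  also have "\<dots> = (\<Prod>i\<in>{?j..<?j + Suc r}. ?q ^ ?m - ?q ^ i)"
    by (subst prod.atLeast_Suc_lessThan) auto
  finally show ?case .
qed

lemma span_independent_extension:
  fixes xs :: "('a::{field,finite}^'n) list"
  assumes W: "vec.subspace W" "set xs \<subseteq> W"
    and ys: "ys \<in> independent_extensions W xs (vec.dim W - length xs)"
    and "length xs \<le> vec.dim W"
  shows "vec.span (set (xs @ ys)) = W"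
proof -
  have sub: "set (xs @ ys) \<subseteq> W" and card: "card (set (xs @ ys)) = vec.dim W"
    using assms distinct_card[of "xs @ ys"] by (auto simp: independent_extensions_def)
  moreover have "vec.independent (set (xs @ ys))"
    using ys by (simp add: independent_extensions_def)
  ultimately have "W \<subseteq> vec.span (set (xs @ ys))"
    using vec.card_eq_dim[OF sub card finite_set] by simp
  moreover have "vec.span (set (xs @ ys)) \<subseteq> W"
    using sub W(1) vec.span_minimal by blast
  ultimately show ?thesis by blast
qed

lemma of_nat_prod_power_diff:
  assumes "1 \<le> q" "\<forall>i\<in>A. i \<le> m"
  shows "real (\<Prod>i\<in>A. q ^ m - q ^ i) = (\<Prod>i\<in>A. real q ^ m - real q ^ i)"
  unfolding of_nat_prod
proof (rule prod.cong)
  fix i assume "i \<in> A"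
  then have "q ^ i \<le> q ^ m"
    using assms by (intro power_increasing) auto
  then show "real (q ^ m - q ^ i) = real q ^ m - real q ^ i"
    by (simp add: of_nat_diff)
qed simp

lemma card_subspaces_containing_independent_list:
  fixes xs :: "('a::{field,finite}^'n) list"
  assumes xs: "distinct xs" "vec.independent (set xs)" and "length xs \<le> k" "k \<le> CARD('n)"
  shows "card {W. vec.subspace W \<and> vec.dim W = k \<and> set xs \<subseteq> W} *
           (\<Prod>i\<in>{length xs..<k}. CARD('a) ^ k - CARD('a) ^ i)
       = (\<Prod>i\<in>{length xs..<k}. CARD('a) ^ CARD('n) - CARD('a) ^ i)"
proof -
  let ?Ws = "{W. vec.subspace W \<and> vec.dim W = k \<and> set xs \<subseteq> W}"
  let ?r = "k - length xs"
  let ?E = "\<lambda>W. independent_extensions W xs ?r"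
  have "?E UNIV = (\<Union>W\<in>?Ws. ?E W)"
  proof
    show "?E UNIV \<subseteq> (\<Union>W\<in>?Ws. ?E W)"
    proof
      fix ys assume ys: "ys \<in> ?E UNIV"
      let ?W = "vec.span (set (xs @ ys))"
      have "vec.dim ?W = k"
        using ys assms distinct_card[of "xs @ ys"]
        by (auto simp: independent_extensions_def vec.dim_eq_card_independent)
      with ys have "?W \<in> ?Ws" "ys \<in> ?E ?W"
        using vec.span_superset[of "set (xs @ ys)"] by (auto simp: independent_extensions_def)
      then show "ys \<in> (\<Union>W\<in>?Ws. ?E W)" by blast
    qed
  qed (auto simp: independent_extensions_def)
  moreover have "?E W \<inter> ?E W' = {}" if "W \<in> ?Ws" "W' \<in> ?Ws" "W \<noteq> W'" for W W'
  proof -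
    have "vec.span (set (xs @ ys)) = V" if "V \<in> ?Ws" "ys \<in> ?E V" for V ys
      using that span_independent_extension[of V xs ys] assms(3) by auto
    with that show ?thesis
      by blast
  qed
  ultimately have "card (?E UNIV) = (\<Sum>W\<in>?Ws. card (?E W))"
    by (simp add: card_UN_disjoint finite_independent_extensions)
  also have "\<dots> = card ?Ws * (\<Prod>i\<in>{length xs..<k}. CARD('a) ^ k - CARD('a) ^ i)"
    using card_independent_extensions[of _ xs ?r] assms by simp
  finally show ?thesis
    using card_independent_extensions[of UNIV xs ?r] assms by (simp add: card_cart_basis)
qed

lemma card_subspaces_containing:
  fixes S :: "('a::{field,finite}^'n) set"
  assumes "vec.dim S \<le> k" "k \<le> CARD('n)"
  shows "real (card {W. vec.subspace W \<and> vec.dim W = k \<and> S \<subseteq> W}) =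
           G CARD('a) (k - vec.dim S) (CARD('n) - vec.dim S)"
proof -
  let ?q = "CARD('a)" and ?j = "vec.dim S"
  let ?Ws = "{W. vec.subspace W \<and> vec.dim W = k \<and> S \<subseteq> W}"
  let ?D = "\<Prod>i\<in>{?j..<k}. real ?q ^ k - real ?q ^ i"
    and ?N = "\<Prod>i\<in>{?j..<k}. real ?q ^ CARD('n) - real ?q ^ i"
  obtain B where B: "B \<subseteq> S" "vec.independent B" "S \<subseteq> vec.span B" "card B = ?j"
    using vec.basis_exists by blast
  obtain xs where xs: "set xs = B" "distinct xs"
    using finite_distinct_list[of B] by auto
  have len: "length xs = ?j"
    using xs B(4) distinct_card[OF xs(2)] by simp
  have "S \<subseteq> W \<longleftrightarrow> set xs \<subseteq> W" if "vec.subspace W" for W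
    using xs(1) B(1,3) vec.span_minimal[of B W] that by auto
  then have "?Ws = {W. vec.subspace W \<and> vec.dim W = k \<and> set xs \<subseteq> W}"
    by auto
  then have "card ?Ws * (\<Prod>i\<in>{?j..<k}. ?q ^ k - ?q ^ i) = (\<Prod>i\<in>{?j..<k}. ?q ^ CARD('n) - ?q ^ i)"
    using card_subspaces_containing_independent_list[of xs k] xs B(2) len assms by simp
  then have "real (card ?Ws) * real (\<Prod>i\<in>{?j..<k}. ?q ^ k - ?q ^ i) =
      real (\<Prod>i\<in>{?j..<k}. ?q ^ CARD('n) - ?q ^ i)"
    by (simp only: of_nat_mult[symmetric])
  moreover have "real (\<Prod>i\<in>{?j..<k}. ?q ^ m - ?q ^ i) = (\<Prod>i\<in>{?j..<k}. real ?q ^ m - real ?q ^ i)"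
    if "k \<le> m" for m
    using that by (intro of_nat_prod_power_diff) auto
  ultimately have "real (card ?Ws) * ?D = ?N"
    using assms(2) by simp
  moreover have "?D \<noteq> 0"
    using card_field_ge_two[where 'a='a] by (simp add: prod_zero_iff)
  ultimately have "real (card ?Ws) = ?N / ?D"
    by (simp add: eq_divide_eq)
  also have "\<dots> = G ?q (k - ?j) (CARD('n) - ?j)"
    using G_eq_prod_ratio_from[OF card_field_ge_two[where 'a='a] assms] by simp
  finally show ?thesis .
qed

lemma nu_eq_G:
  fixes U :: "('a::{field,finite}^'n) set"
  assumes U: "vec.subspace U" and k: "1 \<le> k" "k \<le> CARD('n)"
  shows "real (nu k U) = G CARD('a) k CARD('n)
           + (real CARD('a) ^ vec.dim U - 1) * G CARD('a) (k - 1) (CARD('n) - 1)"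
proof -
  let ?Wk = "{W :: ('a^'n) set. vec.subspace W \<and> vec.dim W = k}"
  let ?c = "\<lambda>u. card {W \<in> ?Wk. u \<in> W}"
  have "nu k U = (\<Sum>W\<in>?Wk. card {u \<in> U. u \<in> W})"
    unfolding nu_def
  proof (rule sum.cong)
    fix W assume "W \<in> ?Wk"
    then have "vec.subspace (W \<inter> U)"
      using vec.subspace_inter U by blast
    moreover have "W \<inter> U = {u \<in> U. u \<in> W}"
      by auto
    ultimately show "CARD('a) ^ vec.dim (W \<inter> U) = card {u \<in> U. u \<in> W}"
      by (simp add: card_subspace)
  qed simp
  also have "\<dots> = (\<Sum>u\<in>U. ?c u)"
    by (rule sum_multicount_gen) auto
  finally have "real (nu k U) = real (?c 0) + (\<Sum>u\<in>U - {0}. real (?c u))"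
    using sum.remove[of U 0 ?c] vec.subspace_0[OF U] by simp
  moreover have "real (?c u) = G CARD('a) (k - vec.dim {u}) (CARD('n) - vec.dim {u})" for u
  proof -
    have "{W \<in> ?Wk. u \<in> W} = {W. vec.subspace W \<and> vec.dim W = k \<and> {u} \<subseteq> W}"
      by auto
    then show ?thesis
      using card_subspaces_containing[of "{u}" k] k by simp
  qed
  moreover have "real (card (U - {0})) = real CARD('a) ^ vec.dim U - 1"
    using card_subspace[OF U] vec.subspace_0[OF U] by (simp add: of_nat_diff)
  ultimately show ?thesis
    by simp
qed

lemma G_symmetric: "k \<le> n \<Longrightarrow> G p (n - k) n = G p k n"
  by (simp add: G_def mult.commute)

lemma G_absorption:
  assumes "2 \<le> p" "1 \<le> k" "k \<le> n"
  shows "qint p k * G p k n = qint p n * G p (k - 1) (n - 1)"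
proof -
  obtain k' n' where k': "k = Suc k'" and n': "n = Suc n'"
    using assms(2,3) by (cases k; cases n) auto
  have "G p k n = qint p n * qfact p n' / (qint p k * (qfact p k' * qfact p (n - k)))"
    unfolding G_def k' n' by (simp only: qfact_Suc) (simp add: ac_simps)
  moreover have "G p (k - 1) (n - 1) = qfact p n' / (qfact p k' * qfact p (n - k))"
    using k' n' by (simp add: G_def)
  moreover have "qint p k \<noteq> 0"
    using qint_pos[OF assms(1,2)] by simp
  ultimately show ?thesis
    by simp
qed

lemma G_add_mult_G_pred:
  assumes "2 \<le> p" "1 \<le> k" "k \<le> n"
  shows "G p k n + (x - 1) * G p (k - 1) (n - 1) =
           G p k n / (real p ^ n - 1) * (real p ^ n - 1 + (x - 1) * (real p ^ k - 1))"
proof -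
  have "real p ^ n > 1"
    using assms by (intro one_less_power) auto
  then have pn: "real p ^ n - 1 \<noteq> 0"
    by simp
  have "(real p ^ k - 1) * G p k n = (real p ^ n - 1) * G p (k - 1) (n - 1)"
    using G_absorption[OF assms] assms(1) by (simp add: qint_def)
  then have "G p (k - 1) (n - 1) = (real p ^ k - 1) / (real p ^ n - 1) * G p k n"
    using pn by (simp add: field_simps)
  then show ?thesis
    using pn by (simp add: distrib_left)
qed

lemma G_combination_ratio:
  assumes p: "2 \<le> p" and k: "1 \<le> k" "k < n" and l: "l \<le> n"
  shows "(G p k n + (real p ^ l - 1) * G p (k - 1) (n - 1)) /
           (G p (n - k) n + (real p ^ (n - l) - 1) * G p (n - k - 1) (n - 1))
         = real p powi (int k + int l - int n)"
proof -
  define a b c d where "a = real p ^ k" and "b = real p ^ (n - k)"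
    and "c = real p ^ l" and "d = real p ^ (n - l)"
  have ab: "a * b = real p ^ n" and cd: "c * d = real p ^ n"
    using k l by (simp_all add: a_def b_def c_def d_def flip: power_add)
  have G_pos: "0 < G p k n"
    using qfact_pos[OF p] by (simp add: G_def)
  have pn: "1 < real p ^ n"
    using p k by (intro one_less_power) auto
  have num: "G p k n + (c - 1) * G p (k - 1) (n - 1) =
      G p k n / (real p ^ n - 1) * (real p ^ n - 1 + (c - 1) * (a - 1))"
    using G_add_mult_G_pred[OF p k(1)] k by (simp add: a_def)
  have den: "G p (n - k) n + (d - 1) * G p (n - k - 1) (n - 1) =
      G p k n / (real p ^ n - 1) * (real p ^ n - 1 + (d - 1) * (b - 1))"
    using G_add_mult_G_pred[OF p, of "n - k" n] G_symmetric[of k n] k by (simp add: b_def)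
  have "(a * b - 1 + (c - 1) * (a - 1)) * (a * b) - (a * b - 1 + (d - 1) * (b - 1)) * (a * c)
      = a * (b - 1) * (a * b - c * d)"
    by (simp add: algebra_simps)
  then have key: "(real p ^ n - 1 + (c - 1) * (a - 1)) * real p ^ n =
      (a * c) * (real p ^ n - 1 + (d - 1) * (b - 1))"
    using ab cd by (simp add: ac_simps)
  have "b \<ge> 1" "d \<ge> 1"
    using p by (simp_all add: b_def d_def one_le_power)
  then have den_pos: "real p ^ n - 1 + (d - 1) * (b - 1) > 0"
    using pn by (simp add: add_pos_nonneg)
  have "G p k n / (real p ^ n - 1) \<noteq> 0"
    using G_pos pn by simp
  then have "(G p k n + (c - 1) * G p (k - 1) (n - 1)) /
      (G p (n - k) n + (d - 1) * G p (n - k - 1) (n - 1)) =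
      (real p ^ n - 1 + (c - 1) * (a - 1)) / (real p ^ n - 1 + (d - 1) * (b - 1))"
    unfolding num den by (rule mult_divide_mult_cancel_left)
  also have "\<dots> = a * c / real p ^ n"
    using key den_pos pn p by (subst frac_eq_eq) auto
  also have "\<dots> = real p powi (int k + int l - int n)"
    using p by (simp add: a_def c_def power_int_diff power_int_add power_add flip: power_int_of_nat)
  finally show ?thesis
    by (simp add: c_def d_def)
qed

theorem lemma3p2:
  fixes U U' :: "('a::{field,finite} ^ 'n) set" and p k l :: nat
  assumes "CARD('a) = p" and "prime p"
    and "CARD('n) \<ge> 2"
    and "1 \<le> k" and "k \<le> CARD('n) - 1"
    and "l \<le> CARD('n)"
    and "vec.subspace U" and "vec.dim U = l"
    and "vec.subspace U'" and "vec.dim U' = CARD('n) - l"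
  shows "real (nu k U) = G p k CARD('n) + (real p ^ l - 1) * G p (k - 1) (CARD('n) - 1)
     \<and> real (nu k U) / real (nu (CARD('n) - k) U') = real p powi (int k + int l - int CARD('n))"
proof -
  have k: "1 \<le> k" "k < CARD('n)"
    using assms(3-5) by auto
  have "real (nu k U) = G p k CARD('n) + (real p ^ l - 1) * G p (k - 1) (CARD('n) - 1)"
    using nu_eq_G[OF assms(7) assms(4)] k assms(1,8) by simp
  moreover have "real (nu (CARD('n) - k) U') = G p (CARD('n) - k) CARD('n)
      + (real p ^ (CARD('n) - l) - 1) * G p (CARD('n) - k - 1) (CARD('n) - 1)"
    using nu_eq_G[OF assms(9), of "CARD('n) - k"] k assms(1,10) by simp
  ultimately show ?thesis
    using G_combination_ratio[OF prime_ge_2_nat[OF assms(2)] k assms(6)] by simp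
qed

end
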